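(* Let $\nu_1,\nu_2>0$ and $\alpha,\beta\ge 0$ be real numbers. Let $X$ and $Y$ be independent random variables with values in $\mathbb{N}=\{0,1,2,\dots\}$ such that $P(X=x)=f(x)>0$ and $P(Y=y)=g(y)>0$ for all $x,y\in\mathbb{N}$. Suppose that for every $s\in\mathbb{N}$, the conditional distribution of $X$ given $X+Y=s$ is the extended negative hypergeometric distribution $\mathrm{ENHG}(s,\nu_1,\nu_2,\alpha,\beta)$, i.e. $$P(X=k\mid X+Y=s)=\frac{\{\Gamma(\nu_1+k)\Gamma(\nu_2+s-k)\}^\beta}{[k!(s-k)!]^\alpha}\Big/ E(s,\nu_1,\nu_2,\alpha,\beta),\qquad k=0,1,\dots,s,$$ where $E(s,\nu_1,\nu_2,\alpha,\beta)=\sum_{x=0}^s \frac{\{\Gamma(\nu_1+x)\Gamma(\nu_2+s-x)\}^\beta}{[x!(s-x)!]^\alpha}$. Then there exists $p>0$ such that $X\sim \mathrm{ECOMP}(\nu_1,p,\alpha,\beta)$ and $Y\sim\mathrm{ECOMP}(\nu_2,p,\alpha,\beta)$, i.e. $$P(X=x)=P(X=0)\frac{[\Gamma(\nu_1+x)]^\beta}{[\Gamma(\nu_1)]^\beta (x!)^\alpha}p^x,\qquad P(Y=y)=P(Y=0)\frac{[\Gamma(\nu_2+y)]^\beta}{[\Gamma(\nu_2)]^\beta (y!)^\alpha}p^y$$ for all $x,y\in\mathbb{N}$.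
   Context: A random variable $X$ follows the extended COM-Poisson distribution $\mathrm{ECOMP}(\nu,p,\alpha,\beta)$ if $$P(X=k)=\frac{[\Gamma(\nu+k)]^\beta}{[\Gamma(\nu)]^\beta (k!)^\alpha}\,p^k\cdot\frac{1}{S(\nu,p,\alpha,\beta)},\qquad k=0,1,2,\dots,$$ where $S(\nu,p,\alpha,\beta)=\sum_{k=0}^\infty \frac{[\Gamma(\nu+k)]^\beta}{[\Gamma(\nu)]^\beta (k!)^\alpha}p^k$ is the (finite) normalizing constant; the parameter space is $(\nu\ge0,p>0,\alpha>\beta\ge0)\cup(\nu>0,0<p<1,\alpha=\beta\ge0)$. *)

theory Defs
  imports "HOL-Probability.Probability"
begin

definition enhg_weight :: "nat \<Rightarrow> real \<Rightarrow> real \<Rightarrow> real \<Rightarrow> real \<Rightarrow> nat \<Rightarrow> real" where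
  "enhg_weight s nu1 nu2 alpha beta k =
     (Gamma (nu1 + real k) * Gamma (nu2 + real (s - k))) powr beta
     / (fact k * fact (s - k)) powr alpha"

definition enhg_norm :: "nat \<Rightarrow> real \<Rightarrow> real \<Rightarrow> real \<Rightarrow> real \<Rightarrow> real" where
  "enhg_norm s nu1 nu2 alpha beta = (\<Sum>x\<le>s. enhg_weight s nu1 nu2 alpha beta x)"

definition enhg_pmf :: "nat \<Rightarrow> real \<Rightarrow> real \<Rightarrow> real \<Rightarrow> real \<Rightarrow> nat \<Rightarrow> real" where
  "enhg_pmf s nu1 nu2 alpha beta k =
     enhg_weight s nu1 nu2 alpha beta k / enhg_norm s nu1 nu2 alpha beta"

definition ecomp_weight :: "real \<Rightarrow> real \<Rightarrow> real \<Rightarrow> real \<Rightarrow> nat \<Rightarrow> real" where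
  "ecomp_weight nu p alpha beta x =
     Gamma (nu + real x) powr beta / (Gamma nu powr beta * fact x powr alpha) * p ^ x"

end

theory Submission
  imports Defs
begin

text \<open>Write \<open>a\<^sub>\<nu>(x) = \<Gamma>(\<nu>+x)\<^sup>\<beta> / (x!)\<^sup>\<alpha>\<close>. The ENHG weight factors as
  \<open>a\<^sub>\<nu>\<^sub>1(k) a\<^sub>\<nu>\<^sub>2(s-k)\<close>, so by independence the conditional law of X given X+Y = s says that
  \<open>F(k) G(s-k)\<close> depends only on s, where \<open>F = P(X = \<cdot>)/a\<^sub>\<nu>\<^sub>1\<close> and \<open>G = P(Y = \<cdot>)/a\<^sub>\<nu>\<^sub>2\<close>.
  Comparing k = m+1 with k = m gives \<open>F(m+1) G(n) = F(m) G(n+1)\<close> for all m, n, which forces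
  F and G to be geometric with a common ratio p; this is the ECOMP form.\<close>

definition gamma_fact_weight :: "real \<Rightarrow> real \<Rightarrow> real \<Rightarrow> nat \<Rightarrow> real" where
  "gamma_fact_weight nu alpha beta x = Gamma (nu + real x) powr beta / fact x powr alpha"

lemma gamma_fact_weight_pos:
  assumes "nu > 0"
  shows "gamma_fact_weight nu alpha beta x > 0"
proof -
  have "Gamma (nu + real x) > 0"
    using assms by (simp add: Gamma_real_pos add_pos_nonneg)
  then show ?thesis
    by (simp add: gamma_fact_weight_def)
qed

lemma enhg_weight_eq_gamma_fact_weight:
  assumes "nu1 > 0" "nu2 > 0"
  shows "enhg_weight s nu1 nu2 alpha beta k
           = gamma_fact_weight nu1 alpha beta k * gamma_fact_weight nu2 alpha beta (s - k)"
proof -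
  have "Gamma (nu1 + real k) > 0" "Gamma (nu2 + real (s - k)) > 0"
    using assms by (auto intro!: Gamma_real_pos add_pos_nonneg)
  then show ?thesis
    by (simp add: enhg_weight_def gamma_fact_weight_def powr_mult)
qed

lemma ecomp_weight_eq_gamma_fact_weight:
  "ecomp_weight nu p alpha beta x
     = gamma_fact_weight nu alpha beta x / gamma_fact_weight nu alpha beta 0 * p ^ x"
  by (simp add: ecomp_weight_def gamma_fact_weight_def)

lemma enhg_norm_pos:
  assumes "nu1 > 0" "nu2 > 0"
  shows "enhg_norm s nu1 nu2 alpha beta > 0"
  unfolding enhg_norm_def enhg_weight_eq_gamma_fact_weight[OF assms]
  using assms by (intro sum_pos) (auto intro!: mult_pos_pos gamma_fact_weight_pos)

lemma (in prob_space) indep_var_prob_point: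
  assumes "indep_var (count_space UNIV) X (count_space UNIV) Y"
  shows "prob {\<omega> \<in> space M. X \<omega> = a \<and> Y \<omega> = b}
           = prob {\<omega> \<in> space M. X \<omega> = a} * prob {\<omega> \<in> space M. Y \<omega> = b}"
proof -
  let ?\<sigma>X = "sigma_sets (space M) {X -` A \<inter> space M | A. A \<in> sets (count_space UNIV)}"
  let ?\<sigma>Y = "sigma_sets (space M) {Y -` A \<inter> space M | A. A \<in> sets (count_space UNIV)}"
  have "indep_set ?\<sigma>X ?\<sigma>Y"
    using assms indep_var_eq by blast
  moreover have "X -` {a} \<inter> space M \<in> ?\<sigma>X" "Y -` {b} \<inter> space M \<in> ?\<sigma>Y"
    by (auto intro: sigma_sets.Basic)
  ultimately have "prob ((X -` {a} \<inter> space M) \<inter> (Y -` {b} \<inter> space M))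
                     = prob (X -` {a} \<inter> space M) * prob (Y -` {b} \<inter> space M)"
    by (rule indep_setD)
  moreover have "(X -` {a} \<inter> space M) \<inter> (Y -` {b} \<inter> space M) = {\<omega> \<in> space M. X \<omega> = a \<and> Y \<omega> = b}"
    "X -` {a} \<inter> space M = {\<omega> \<in> space M. X \<omega> = a}" "Y -` {b} \<inter> space M = {\<omega> \<in> space M. Y \<omega> = b}"
    by auto
  ultimately show ?thesis
    by simp
qed

lemma (in prob_space) conditional_enhg_imp_weighted_product:
  fixes X Y :: "'a \<Rightarrow> nat"
  assumes "nu1 > 0" "nu2 > 0"
    and "indep_var (count_space UNIV) X (count_space UNIV) Y"
    and "k \<le> s"
    and "prob {\<omega> \<in> space M. X \<omega> = k \<and> X \<omega> + Y \<omega> = s} / prob {\<omega> \<in> space M. X \<omega> + Y \<omega> = s}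
           = enhg_pmf s nu1 nu2 alpha beta k"
  shows "prob {\<omega> \<in> space M. X \<omega> = k} / gamma_fact_weight nu1 alpha beta k
           * (prob {\<omega> \<in> space M. Y \<omega> = s - k} / gamma_fact_weight nu2 alpha beta (s - k))
         = prob {\<omega> \<in> space M. X \<omega> + Y \<omega> = s} / enhg_norm s nu1 nu2 alpha beta"
proof -
  let ?a = "gamma_fact_weight nu1 alpha beta k" and ?b = "gamma_fact_weight nu2 alpha beta (s - k)"
  let ?h = "prob {\<omega> \<in> space M. X \<omega> + Y \<omega> = s}" and ?E = "enhg_norm s nu1 nu2 alpha beta"
  have "{\<omega> \<in> space M. X \<omega> = k \<and> X \<omega> + Y \<omega> = s} = {\<omega> \<in> space M. X \<omega> = k \<and> Y \<omega> = s - k}"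
    using \<open>k \<le> s\<close> by auto
  with assms(5) have cond: "prob {\<omega> \<in> space M. X \<omega> = k} * prob {\<omega> \<in> space M. Y \<omega> = s - k} / ?h
                              = ?a * ?b / ?E"
    by (simp add: indep_var_prob_point[OF assms(3)] enhg_pmf_def
        enhg_weight_eq_gamma_fact_weight[OF assms(1,2)])
  have pos: "?a > 0" "?b > 0" "?E > 0"
    using assms(1,2) by (simp_all add: gamma_fact_weight_pos enhg_norm_pos)
  with cond have "?h \<noteq> 0"
    by auto
  with cond pos show ?thesis
    by (simp add: field_simps)
qed

lemma shift_balanced_imp_geometric:
  fixes F G :: "nat \<Rightarrow> real"
  assumes F_pos: "\<And>n. F n > 0" and G_pos: "\<And>n. G n > 0"
    and balanced: "\<And>m n. F (Suc m) * G n = F m * G (Suc n)"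
  shows "\<exists>p>0. \<forall>n. F n = F 0 * p ^ n \<and> G n = G 0 * p ^ n"
proof (intro exI conjI allI)
  define p where "p = F 1 / F 0"
  show "p > 0"
    using F_pos by (simp add: p_def)
  have ratio: "G 1 / G 0 = p"
    using balanced[of 0 0] F_pos[of 0] G_pos[of 0] by (simp add: p_def field_simps)
  have F_step: "F (Suc m) = F m * p" for m
    using balanced[of m 0] G_pos[of 0] by (simp flip: ratio add: field_simps)
  have G_step: "G (Suc n) = G n * p" for n
    using balanced[of 0 n] F_pos[of 0] by (simp add: p_def field_simps)
  show "F n = F 0 * p ^ n" for n
    by (induction n) (simp_all add: F_step)
  show "G n = G 0 * p ^ n" for n
    by (induction n) (simp_all add: G_step)
qed

theorem theoremB:
  fixes M :: "'a measure" and X Y :: "'a \<Rightarrow> nat"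
    and nu1 nu2 alpha beta :: real
  assumes "prob_space M"
    and "nu1 > 0" and "nu2 > 0" and "alpha \<ge> 0" and "beta \<ge> 0"
    and "prob_space.indep_var M (count_space UNIV) X (count_space UNIV) Y"
    and "\<And>x. measure M {\<omega> \<in> space M. X \<omega> = x} > 0"
    and "\<And>y. measure M {\<omega> \<in> space M. Y \<omega> = y} > 0"
    and "\<And>s k. k \<le> s \<Longrightarrow>
           measure M {\<omega> \<in> space M. X \<omega> = k \<and> X \<omega> + Y \<omega> = s}
             / measure M {\<omega> \<in> space M. X \<omega> + Y \<omega> = s}
           = enhg_pmf s nu1 nu2 alpha beta k"
  shows "\<exists>p>0.
           (\<forall>x. measure M {\<omega> \<in> space M. X \<omega> = x}
                  = measure M {\<omega> \<in> space M. X \<omega> = 0} * ecomp_weight nu1 p alpha beta x) \<and>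
           (\<forall>y. measure M {\<omega> \<in> space M. Y \<omega> = y}
                  = measure M {\<omega> \<in> space M. Y \<omega> = 0} * ecomp_weight nu2 p alpha beta y)"
proof -
  define F where "F x = measure M {\<omega> \<in> space M. X \<omega> = x} / gamma_fact_weight nu1 alpha beta x" for x
  define G where "G y = measure M {\<omega> \<in> space M. Y \<omega> = y} / gamma_fact_weight nu2 alpha beta y" for y
  have a_pos: "gamma_fact_weight nu1 alpha beta x > 0" "gamma_fact_weight nu2 alpha beta x > 0" for x
    using assms(2,3) by (simp_all add: gamma_fact_weight_pos)
  have product: "F k * G (s - k) = measure M {\<omega> \<in> space M. X \<omega> + Y \<omega> = s} / enhg_norm s nu1 nu2 alpha beta"
    if "k \<le> s" for s k
    unfolding F_def G_def
    using prob_space.conditional_enhg_imp_weighted_product[OF assms(1-3,6) that assms(9)[OF that]] .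
  have "F (Suc m) * G n = F m * G (Suc n)" for m n
    using product[of "Suc m" "Suc (m + n)"] product[of m "Suc (m + n)"] by (simp add: Suc_diff_le)
  moreover have "F n > 0" "G n > 0" for n
    using assms(7,8) a_pos by (simp_all add: F_def G_def)
  ultimately obtain p where "p > 0" and geometric: "\<And>n. F n = F 0 * p ^ n \<and> G n = G 0 * p ^ n"
    using shift_balanced_imp_geometric by blast
  have "measure M {\<omega> \<in> space M. X \<omega> = x}
          = measure M {\<omega> \<in> space M. X \<omega> = 0} * ecomp_weight nu1 p alpha beta x"
       "measure M {\<omega> \<in> space M. Y \<omega> = x}
          = measure M {\<omega> \<in> space M. Y \<omega> = 0} * ecomp_weight nu2 p alpha beta x" for x
    using geometric[of x] a_pos[of x] a_pos[of 0]
    unfolding ecomp_weight_eq_gamma_fact_weight F_def G_def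
    by (simp_all add: field_simps)
  with \<open>p > 0\<close> show ?thesis
    by blast
qed

end
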